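(* If $G$ is a connected graph with girth at least $5$ and maximum degree $\Delta$, then $\chi_{D\ell}(G)\le\Delta+2$; that is, for every assignment of lists $L(v)$ of colors with $|L(v)|\ge\Delta+2$ for all $v\in V(G)$, there is a proper distinguishing coloring $\varphi$ of $G$ with $\varphi(v)\in L(v)$ for all $v$.
   Context: A coloring $\varphi$ of $G$ is proper if adjacent vertices get different colors, and distinguishing if the only automorphism $f$ of $G$ with $\varphi(f(v))=\varphi(v)$ for all $v$ is the identity. The distinguishing list chromatic number $\chi_{D\ell}(G)$ is the smallest $k$ such that for every list assignment $L$ with $|L(v)|\ge k$ for all $v$, there exists a proper distinguishing coloring $\varphi$ with $\varphi(v)\in L(v)$ for all $v$. *)

theory Defs
  imports Main
begin

definition graph :: "'a set \<Rightarrow> ('a \<Rightarrow> 'a \<Rightarrow> bool) \<Rightarrow> bool" where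
  "graph V E \<longleftrightarrow> finite V \<and> (\<forall>u v. E u v \<longrightarrow> u \<in> V \<and> v \<in> V)
     \<and> (\<forall>u v. E u v \<longrightarrow> E v u) \<and> (\<forall>v. \<not> E v v)"

definition connected_graph :: "'a set \<Rightarrow> ('a \<Rightarrow> 'a \<Rightarrow> bool) \<Rightarrow> bool" where
  "connected_graph V E \<longleftrightarrow> V \<noteq> {} \<and> (\<forall>u\<in>V. \<forall>v\<in>V. E\<^sup>*\<^sup>* u v)"

definition degree :: "('a \<Rightarrow> 'a \<Rightarrow> bool) \<Rightarrow> 'a \<Rightarrow> nat" where
  "degree E v = card {u. E v u}"

definition max_degree :: "'a set \<Rightarrow> ('a \<Rightarrow> 'a \<Rightarrow> bool) \<Rightarrow> nat" where
  "max_degree V E = Max (degree E ` V)"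

definition is_cycle :: "'a set \<Rightarrow> ('a \<Rightarrow> 'a \<Rightarrow> bool) \<Rightarrow> 'a list \<Rightarrow> bool" where
  "is_cycle V E cs \<longleftrightarrow> length cs \<ge> 3 \<and> distinct cs \<and> set cs \<subseteq> V
     \<and> (\<forall>i < length cs. E (cs ! i) (cs ! ((i + 1) mod length cs)))"

definition girth_at_least :: "'a set \<Rightarrow> ('a \<Rightarrow> 'a \<Rightarrow> bool) \<Rightarrow> nat \<Rightarrow> bool" where
  "girth_at_least V E k \<longleftrightarrow> (\<forall>cs. is_cycle V E cs \<longrightarrow> length cs \<ge> k)"

definition automorphism :: "'a set \<Rightarrow> ('a \<Rightarrow> 'a \<Rightarrow> bool) \<Rightarrow> ('a \<Rightarrow> 'a) \<Rightarrow> bool" where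
  "automorphism V E f \<longleftrightarrow> bij_betw f V V \<and> (\<forall>u\<in>V. \<forall>v\<in>V. E u v \<longleftrightarrow> E (f u) (f v))"

definition proper_coloring :: "'a set \<Rightarrow> ('a \<Rightarrow> 'a \<Rightarrow> bool) \<Rightarrow> ('a \<Rightarrow> 'c) \<Rightarrow> bool" where
  "proper_coloring V E \<phi> \<longleftrightarrow> (\<forall>u\<in>V. \<forall>v\<in>V. E u v \<longrightarrow> \<phi> u \<noteq> \<phi> v)"

definition distinguishing :: "'a set \<Rightarrow> ('a \<Rightarrow> 'a \<Rightarrow> bool) \<Rightarrow> ('a \<Rightarrow> 'c) \<Rightarrow> bool" where
  "distinguishing V E \<phi> \<longleftrightarrow>
     (\<forall>f. automorphism V E f \<and> (\<forall>v\<in>V. \<phi> (f v) = \<phi> v) \<longrightarrow> (\<forall>v\<in>V. f v = v))"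

end

theory Submission
  imports Defs
begin

text \<open>Rank the vertices from a root r so that every other vertex has an earlier neighbour and,
  whenever v has a unique earlier neighbour p, every later neighbour of p also has p as its unique
  earlier neighbour; in a connected triangle-free graph such a ranking is grown one vertex at a time.
  Colour greedily along the ranking, avoiding the colours of the earlier neighbours, of r, and of the
  earlier vertices with the same unique earlier neighbour: at most \<open>\<Delta> + 1\<close> colours are forbidden.
  A colour-preserving automorphism then fixes the vertices in order of rank: r has a colour of its
  own; a vertex with two fixed earlier neighbours is fixed because there are no 4-cycles; and a
  vertex v with unique earlier neighbour p can only be sent to another neighbour of p, which is
  either earlier (hence fixed) or later and then shares the parent p, so its colour differs.\<close>

lemma graph_finite: "graph V E \<Longrightarrow> finite V"
  by (simp add: graph_def)

lemma graph_sym: "graph V E \<Longrightarrow> E u v \<Longrightarrow> E v u"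
  by (simp add: graph_def)

lemma graph_irrefl: "graph V E \<Longrightarrow> \<not> E v v"
  by (simp add: graph_def)

lemma graph_edge_in_vertices: "graph V E \<Longrightarrow> E u v \<Longrightarrow> u \<in> V \<and> v \<in> V"
  by (simp add: graph_def)

lemma girth_ge5_no_triangle:
  assumes G: "graph V E" and girth: "girth_at_least V E 5"
    and "E a b" "E b c" "E c a"
  shows False
proof -
  have "distinct [a, b, c]"
    using assms graph_irrefl[OF G] by auto
  moreover have "set [a, b, c] \<subseteq> V"
    using assms graph_edge_in_vertices[OF G] by auto
  moreover have "E ([a, b, c] ! i) ([a, b, c] ! ((i + 1) mod 3))" if "i < 3" for i
  proof -
    have "i = 0 \<or> i = 1 \<or> i = 2" using that by auto
    then show ?thesis using assms by auto
  qed
  ultimately have "is_cycle V E [a, b, c]"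
    by (simp add: is_cycle_def)
  then show False
    using girth by (fastforce simp: girth_at_least_def)
qed

lemma girth_ge5_no_square:
  assumes G: "graph V E" and girth: "girth_at_least V E 5"
    and "E a v" "E v b" "E b w" "E w a" "a \<noteq> b" "v \<noteq> w"
  shows False
proof -
  have "distinct [a, v, b, w]"
    using assms graph_irrefl[OF G] by auto
  moreover have "set [a, v, b, w] \<subseteq> V"
    using assms graph_edge_in_vertices[OF G] by auto
  moreover have "E ([a, v, b, w] ! i) ([a, v, b, w] ! ((i + 1) mod 4))" if "i < 4" for i
  proof -
    have "i = 0 \<or> i = 1 \<or> i = 2 \<or> i = 3" using that by auto
    then show ?thesis using assms by auto
  qed
  ultimately have "is_cycle V E [a, v, b, w]"
    by (simp add: is_cycle_def)
  then show False
    using girth by (fastforce simp: girth_at_least_def)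
qed

definition triangle_free :: "('a \<Rightarrow> 'a \<Rightarrow> bool) \<Rightarrow> bool" where
  "triangle_free E \<longleftrightarrow> (\<forall>a b c. E a b \<longrightarrow> E b c \<longrightarrow> \<not> E c a)"

lemma girth_ge5_triangle_free:
  assumes "graph V E" "girth_at_least V E 5"
  shows "triangle_free E"
  unfolding triangle_free_def using girth_ge5_no_triangle[OF assms] by blast

lemma rtranclp_exits_set:
  assumes "E\<^sup>*\<^sup>* a b" "a \<in> S" "b \<notin> S"
  shows "\<exists>u\<in>S. \<exists>v. v \<notin> S \<and> E u v"
  using assms by (induction rule: rtranclp_induct) blast+

lemma greedy_list_coloring_ranked:
  fixes rk :: "'a \<Rightarrow> 'b::linorder" and L :: "'a \<Rightarrow> 'c set"
  assumes "finite V"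
    and few_earlier: "\<And>v. v \<in> V \<Longrightarrow> card {u\<in>V. H u v \<and> rk u < rk v} < card (L v)"
    and "S \<subseteq> V" "finite S"
  shows "\<exists>\<phi>. (\<forall>v\<in>S. \<phi> v \<in> L v) \<and> (\<forall>u\<in>S. \<forall>v\<in>S. H u v \<and> rk u < rk v \<longrightarrow> \<phi> u \<noteq> \<phi> v)"
  using \<open>finite S\<close> \<open>S \<subseteq> V\<close>
proof (induction S rule: finite_ranking_induct[where f = rk])
  case empty
  then show ?case by simp
next
  case (insert w S)
  then obtain \<phi> where \<phi>_L: "\<forall>v\<in>S. \<phi> v \<in> L v"
    and \<phi>_H: "\<forall>u\<in>S. \<forall>v\<in>S. H u v \<and> rk u < rk v \<longrightarrow> \<phi> u \<noteq> \<phi> v"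
    by auto
  let ?F = "{u\<in>V. H u w \<and> rk u < rk w}"
  have "w \<in> V" using insert.prems by simp
  have "card (\<phi> ` ?F) < card (L w)"
    using card_image_le[of ?F \<phi>] few_earlier[OF \<open>w \<in> V\<close>] \<open>finite V\<close> by simp
  moreover have "finite (\<phi> ` ?F)"
    using \<open>finite V\<close> by simp
  ultimately have "\<not> L w \<subseteq> \<phi> ` ?F"
    using card_mono leD by blast
  then obtain c where c: "c \<in> L w" "c \<notin> \<phi> ` ?F"
    by blast
  show ?case
  proof (intro exI[of _ "\<phi>(w := c)"] conjI ballI impI)
    fix v assume "v \<in> insert w S"
    then show "(\<phi>(w := c)) v \<in> L v" using \<phi>_L c by auto
  next
    fix u v assume "u \<in> insert w S" "v \<in> insert w S" "H u v \<and> rk u < rk v"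
    moreover have "v \<noteq> w \<Longrightarrow> u \<noteq> w"
      using insert.hyps(2) \<open>v \<in> insert w S\<close> \<open>H u v \<and> rk u < rk v\<close> by force
    ultimately show "(\<phi>(w := c)) u \<noteq> (\<phi>(w := c)) v"
      using \<phi>_H c insert.prems by auto
  qed
qed

lemma greedy_list_coloring:
  fixes rk :: "'a \<Rightarrow> 'b::linorder" and L :: "'a \<Rightarrow> 'c set"
  assumes "finite V" and "inj_on rk V"
    and H_sym: "\<And>u v. H u v \<Longrightarrow> H v u" and H_irrefl: "\<And>v. \<not> H v v"
    and few_earlier: "\<And>v. v \<in> V \<Longrightarrow> card {u\<in>V. H u v \<and> rk u < rk v} < card (L v)"
  shows "\<exists>\<phi>. (\<forall>v\<in>V. \<phi> v \<in> L v) \<and> (\<forall>u\<in>V. \<forall>v\<in>V. H u v \<longrightarrow> \<phi> u \<noteq> \<phi> v)"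
proof -
  obtain \<phi> where \<phi>_L: "\<forall>v\<in>V. \<phi> v \<in> L v"
    and \<phi>_H: "\<forall>u\<in>V. \<forall>v\<in>V. H u v \<and> rk u < rk v \<longrightarrow> \<phi> u \<noteq> \<phi> v"
    using greedy_list_coloring_ranked[OF \<open>finite V\<close> few_earlier subset_refl \<open>finite V\<close>] by blast
  have "\<phi> u \<noteq> \<phi> v" if "u \<in> V" "v \<in> V" "H u v" for u v
  proof -
    have "rk u \<noteq> rk v"
      using that H_irrefl inj_onD[OF \<open>inj_on rk V\<close>] by metis
    then show ?thesis
      using \<phi>_H that H_sym by (metis linorder_neqE)
  qed
  then show ?thesis
    using \<phi>_L by blast
qed

definition earlier_nbrs :: "('a \<Rightarrow> 'a \<Rightarrow> bool) \<Rightarrow> ('a \<Rightarrow> nat) \<Rightarrow> 'a set \<Rightarrow> 'a \<Rightarrow> 'a set" where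
  "earlier_nbrs E rk S v = {u\<in>S. E u v \<and> rk u < rk v}"

definition rooted_ranking :: "('a \<Rightarrow> 'a \<Rightarrow> bool) \<Rightarrow> 'a \<Rightarrow> 'a set \<Rightarrow> ('a \<Rightarrow> nat) \<Rightarrow> bool" where
  "rooted_ranking E r S rk \<longleftrightarrow> r \<in> S \<and> rk r = 0 \<and> inj_on rk S \<and> (\<forall>v\<in>S. rk v < card S)
     \<and> (\<forall>v\<in>S - {r}. earlier_nbrs E rk S v \<noteq> {})"

definition unique_parent_inherited :: "('a \<Rightarrow> 'a \<Rightarrow> bool) \<Rightarrow> ('a \<Rightarrow> nat) \<Rightarrow> 'a set \<Rightarrow> bool" where
  "unique_parent_inherited E rk S \<longleftrightarrow> (\<forall>v\<in>S. \<forall>x\<in>S. \<forall>p.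
     earlier_nbrs E rk S v = {p} \<and> E p x \<and> rk v < rk x \<longrightarrow> earlier_nbrs E rk S x = {p})"

definition unique_parent_frontier :: "'a set \<Rightarrow> ('a \<Rightarrow> 'a \<Rightarrow> bool) \<Rightarrow> ('a \<Rightarrow> nat) \<Rightarrow> 'a set \<Rightarrow> bool" where
  "unique_parent_frontier V E rk S \<longleftrightarrow> (\<forall>v\<in>S. \<forall>y\<in>V - S. \<forall>p.
     earlier_nbrs E rk S v = {p} \<and> E p y \<longrightarrow> {u\<in>S. E u y} = {p})"

definition frontier_after_parents :: "'a set \<Rightarrow> ('a \<Rightarrow> 'a \<Rightarrow> bool) \<Rightarrow> ('a \<Rightarrow> nat) \<Rightarrow> 'a set \<Rightarrow> bool" where
  "frontier_after_parents V E rk S \<longleftrightarrow> (\<forall>v\<in>S. \<forall>m\<in>S. \<forall>y\<in>V - S. \<forall>p.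
     earlier_nbrs E rk S v = {p} \<and> rk m < rk p \<longrightarrow> \<not> E m y)"

text \<open>The last two invariants are vacuous for S = V; they are what keeps
  \<open>unique_parent_inherited\<close> true while S grows.\<close>
definition growing_ranking :: "'a set \<Rightarrow> ('a \<Rightarrow> 'a \<Rightarrow> bool) \<Rightarrow> 'a \<Rightarrow> 'a set \<Rightarrow> ('a \<Rightarrow> nat) \<Rightarrow> bool" where
  "growing_ranking V E r S rk \<longleftrightarrow> S \<subseteq> V \<and> rooted_ranking E r S rk \<and> unique_parent_inherited E rk S
     \<and> unique_parent_frontier V E rk S \<and> frontier_after_parents V E rk S"

definition next_vertex :: "'a set \<Rightarrow> ('a \<Rightarrow> 'a \<Rightarrow> bool) \<Rightarrow> ('a \<Rightarrow> nat) \<Rightarrow> 'a set \<Rightarrow> 'a \<Rightarrow> 'a \<Rightarrow> bool" where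
  "next_vertex V E rk S p y \<longleftrightarrow> p \<in> S \<and> y \<in> V - S \<and> E p y
     \<and> (\<forall>m\<in>S. \<forall>z\<in>V - S. E m z \<longrightarrow> rk p \<le> rk m)
     \<and> ({u\<in>S. E u y} = {p} \<longrightarrow> (\<forall>z\<in>V - S. E p z \<longrightarrow> {u\<in>S. E u z} = {p}))"

lemma next_vertex_exists:
  assumes "\<exists>m\<in>S. \<exists>z\<in>V - S. E m z"
  shows "\<exists>p y. next_vertex V E rk S p y"
proof -
  obtain p where p: "p \<in> S" "\<exists>z\<in>V - S. E p z"
    and p_least: "\<And>m. m \<in> S \<and> (\<exists>z\<in>V - S. E m z) \<Longrightarrow> rk p \<le> rk m"
    using ex_has_least_nat[of "\<lambda>m. m \<in> S \<and> (\<exists>z\<in>V - S. E m z)" _ rk] assms by blast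
  then show ?thesis
    unfolding next_vertex_def by (cases "\<exists>y\<in>V - S. E p y \<and> {u\<in>S. E u y} \<noteq> {p}") blast+
qed

lemma earlier_nbrs_extend_old:
  assumes "\<forall>u\<in>S. rk u < n" "y \<notin> S" "v \<in> S"
  shows "earlier_nbrs E (rk(y := n)) (insert y S) v = earlier_nbrs E rk S v"
  using assms by (auto simp: earlier_nbrs_def)

lemma earlier_nbrs_extend_new:
  assumes "\<forall>u\<in>S. rk u < n" "y \<notin> S"
  shows "earlier_nbrs E (rk(y := n)) (insert y S) y = {u\<in>S. E u y}"
  using assms by (auto simp: earlier_nbrs_def)

lemma rooted_ranking_extend:
  assumes R: "rooted_ranking E r S rk" and "y \<notin> S" "p \<in> S" "E p y"
  shows "rooted_ranking E r (insert y S) (rk(y := card S))"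
proof -
  have rk_less: "\<forall>u\<in>S. rk u < card S"
    using R by (simp add: rooted_ranking_def)
  then have "finite S"
    using R card_gt_0_iff by (fastforce simp: rooted_ranking_def)
  then have card_insert: "card (insert y S) = Suc (card S)"
    using \<open>y \<notin> S\<close> by simp
  have "inj_on (rk(y := card S)) S"
    using R \<open>y \<notin> S\<close> by (auto simp: rooted_ranking_def inj_on_def)
  moreover have "card S \<notin> rk ` S"
    using rk_less by auto
  ultimately have "inj_on (rk(y := card S)) (insert y S)"
    using \<open>y \<notin> S\<close> by (auto simp: image_iff)
  moreover have "earlier_nbrs E (rk(y := card S)) (insert y S) v \<noteq> {}" if "v \<in> insert y S - {r}" for v
    using that R \<open>p \<in> S\<close> \<open>E p y\<close> rk_less \<open>y \<notin> S\<close>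
      earlier_nbrs_extend_old[OF rk_less \<open>y \<notin> S\<close>] earlier_nbrs_extend_new[OF rk_less \<open>y \<notin> S\<close>]
    by (auto simp: rooted_ranking_def)
  ultimately show ?thesis
    using R rk_less card_insert \<open>y \<notin> S\<close> by (auto simp: rooted_ranking_def)
qed

lemma unique_parent_inherited_extend:
  assumes inherited: "unique_parent_inherited E rk S" and frontier: "unique_parent_frontier V E rk S"
    and rk_less: "\<forall>u\<in>S. rk u < card S" and y: "y \<in> V - S"
  shows "unique_parent_inherited E (rk(y := card S)) (insert y S)"
  unfolding unique_parent_inherited_def
proof (intro ballI allI impI)
  let ?rk = "rk(y := card S)"
  fix v x p
  assume v: "v \<in> insert y S" and x: "x \<in> insert y S"
    and h: "earlier_nbrs E ?rk (insert y S) v = {p} \<and> E p x \<and> ?rk v < ?rk x"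
  have "?rk x \<le> card S"
    using x rk_less by (cases "x = y") auto
  with h have "v \<noteq> y"
    by auto
  with v have "v \<in> S" by simp
  have parent: "earlier_nbrs E rk S v = {p}"
    using h earlier_nbrs_extend_old[OF rk_less _ \<open>v \<in> S\<close>] y by simp
  show "earlier_nbrs E ?rk (insert y S) x = {p}"
  proof (cases "x = y")
    case True
    have "{u\<in>S. E u y} = {p}"
      using frontier \<open>v \<in> S\<close> parent h y True unfolding unique_parent_frontier_def by blast
    then show ?thesis
      using earlier_nbrs_extend_new[OF rk_less] y True by simp
  next
    case False
    with x have "x \<in> S" by simp
    have "rk v < rk x"
      using h \<open>v \<noteq> y\<close> False by simp
    then have "earlier_nbrs E rk S x = {p}"
      using inherited \<open>v \<in> S\<close> \<open>x \<in> S\<close> parent h unfolding unique_parent_inherited_def by blast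
    then show ?thesis
      using earlier_nbrs_extend_old[OF rk_less _ \<open>x \<in> S\<close>] y by simp
  qed
qed

lemma unique_parent_with_frontier_is_next:
  assumes R: "growing_ranking V E r S rk" and choice: "next_vertex V E rk S p y"
    and "v \<in> S" "earlier_nbrs E rk S v = {q}" "z \<in> V - S" "E q z"
  shows "q = p"
proof -
  have "q \<in> S"
    using assms(4) by (auto simp: earlier_nbrs_def)
  have "p \<in> S" "y \<in> V - S" "E p y"
    using choice by (auto simp: next_vertex_def)
  have "rk p \<le> rk q"
    using choice \<open>q \<in> S\<close> assms(5,6) unfolding next_vertex_def by blast
  moreover have "\<not> rk p < rk q"
    using R \<open>v \<in> S\<close> \<open>p \<in> S\<close> \<open>y \<in> V - S\<close> \<open>E p y\<close> assms(4)
    unfolding growing_ranking_def frontier_after_parents_def by blast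
  moreover have "inj_on rk S"
    using R by (simp add: growing_ranking_def rooted_ranking_def)
  ultimately show "q = p"
    using inj_onD[of rk S q p] \<open>q \<in> S\<close> \<open>p \<in> S\<close> by simp
qed

lemma unique_parent_frontier_extend:
  assumes sym: "\<And>a b. E a b \<Longrightarrow> E b a" and no_triangle: "triangle_free E"
    and R: "growing_ranking V E r S rk" and choice: "next_vertex V E rk S p y"
  shows "unique_parent_frontier V E (rk(y := card S)) (insert y S)"
  unfolding unique_parent_frontier_def
proof (intro ballI allI impI)
  let ?rk = "rk(y := card S)"
  fix v z q
  assume v: "v \<in> insert y S" and z: "z \<in> V - insert y S"
    and h: "earlier_nbrs E ?rk (insert y S) v = {q} \<and> E q z"
  have rk_less: "\<forall>u\<in>S. rk u < card S"
    using R by (auto simp: growing_ranking_def rooted_ranking_def)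
  have "p \<in> S" "y \<in> V - S" "E p y"
    using choice by (auto simp: next_vertex_def)
  have "z \<in> V - S" using z by simp
  have q_p: "q = p \<and> {u\<in>S. E u z} = {p}"
  proof (cases "v = y")
    case True
    then have "{u\<in>S. E u y} = {q}"
      using h earlier_nbrs_extend_new[OF rk_less] \<open>y \<in> V - S\<close> by simp
    moreover have "p \<in> {u\<in>S. E u y}"
      using \<open>p \<in> S\<close> \<open>E p y\<close> by simp
    ultimately show ?thesis
      using choice h \<open>z \<in> V - S\<close> unfolding next_vertex_def by auto
  next
    case False
    with v have "v \<in> S" by simp
    then have parent: "earlier_nbrs E rk S v = {q}"
      using h earlier_nbrs_extend_old[OF rk_less] \<open>y \<in> V - S\<close> by simp
    then have "q = p"
      using unique_parent_with_frontier_is_next[OF R choice \<open>v \<in> S\<close> _ \<open>z \<in> V - S\<close>] h by blast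
    moreover have "{u\<in>S. E u z} = {q}"
      using R \<open>v \<in> S\<close> \<open>z \<in> V - S\<close> parent h
      unfolding growing_ranking_def unique_parent_frontier_def by blast
    ultimately show ?thesis by simp
  qed
  moreover have "\<not> E y z"
  proof
    assume "E y z"
    moreover have "E z p"
      using h sym q_p by blast
    ultimately show False
      using no_triangle \<open>E p y\<close> unfolding triangle_free_def by blast
  qed
  ultimately show "{u\<in>insert y S. E u z} = {q}"
    by auto
qed

lemma frontier_after_parents_extend:
  assumes R: "growing_ranking V E r S rk" and choice: "next_vertex V E rk S p y"
  shows "frontier_after_parents V E (rk(y := card S)) (insert y S)"
  unfolding frontier_after_parents_def
proof (intro ballI allI impI)
  let ?rk = "rk(y := card S)"
  fix v m z q
  assume v: "v \<in> insert y S" and m: "m \<in> insert y S" and z: "z \<in> V - insert y S"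
    and h: "earlier_nbrs E ?rk (insert y S) v = {q} \<and> ?rk m < ?rk q"
  have rk_less: "\<forall>u\<in>S. rk u < card S"
    using R by (auto simp: growing_ranking_def rooted_ranking_def)
  have after: "frontier_after_parents V E rk S"
    using R by (auto simp: growing_ranking_def)
  have "y \<in> V - S" and p_least: "\<And>m z. m \<in> S \<Longrightarrow> z \<in> V - S \<Longrightarrow> E m z \<Longrightarrow> rk p \<le> rk m"
    using choice by (auto simp: next_vertex_def)
  have "z \<in> V - S" using z by simp
  show "\<not> E m z"
  proof (cases "v = y")
    case True
    then have "{u\<in>S. E u y} = {q}"
      using h earlier_nbrs_extend_new[OF rk_less] \<open>y \<in> V - S\<close> by simp
    then have "q = p" "q \<in> S"
      using choice unfolding next_vertex_def by auto
    then have "m \<in> S" "rk m < rk p"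
      using m h rk_less \<open>y \<in> V - S\<close> by (auto split: if_splits)
    then show ?thesis
      using p_least \<open>z \<in> V - S\<close> by fastforce
  next
    case False
    with v have "v \<in> S" by simp
    then have parent: "earlier_nbrs E rk S v = {q}"
      using h earlier_nbrs_extend_old[OF rk_less] \<open>y \<in> V - S\<close> by simp
    then have "q \<in> S"
      by (auto simp: earlier_nbrs_def)
    then have "m \<in> S" "rk m < rk q"
      using m h rk_less \<open>y \<in> V - S\<close> by (auto split: if_splits)
    then show ?thesis
      using after \<open>v \<in> S\<close> \<open>z \<in> V - S\<close> parent unfolding frontier_after_parents_def by blast
  qed
qed

lemma growing_ranking_extend:
  assumes sym: "\<And>a b. E a b \<Longrightarrow> E b a" and no_triangle: "triangle_free E"
    and R: "growing_ranking V E r S rk" and choice: "next_vertex V E rk S p y"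
  shows "growing_ranking V E r (insert y S) (rk(y := card S))"
proof -
  have "y \<in> V - S" "p \<in> S" "E p y"
    using choice by (auto simp: next_vertex_def)
  moreover have "\<forall>u\<in>S. rk u < card S"
    using R by (simp add: growing_ranking_def rooted_ranking_def)
  ultimately show ?thesis
    using R rooted_ranking_extend[of E r S rk y p] unique_parent_inherited_extend[of E rk S V y]
      unique_parent_frontier_extend[OF sym no_triangle R choice] frontier_after_parents_extend[OF R choice]
    unfolding growing_ranking_def by auto
qed

lemma growing_ranking_of_card:
  assumes G: "graph V E" and C: "connected_graph V E"
    and no_triangle: "triangle_free E"
    and "r \<in> V" and "1 \<le> k" "k \<le> card V"
  shows "\<exists>S rk. growing_ranking V E r S rk \<and> card S = k"
  using \<open>1 \<le> k\<close> \<open>k \<le> card V\<close>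
proof (induction k rule: nat_induct_at_least)
  case base
  have no_earlier: "earlier_nbrs E (\<lambda>_. 0) {r} v = {}" for v
    by (simp add: earlier_nbrs_def)
  have "growing_ranking V E r {r} (\<lambda>_. 0)"
    using \<open>r \<in> V\<close> unfolding growing_ranking_def rooted_ranking_def unique_parent_inherited_def
      unique_parent_frontier_def frontier_after_parents_def no_earlier by simp
  then show ?case
    by (intro exI[of _ "{r}"] exI[of _ "\<lambda>_. 0"]) simp
next
  case (Suc k)
  then obtain S rk where R: "growing_ranking V E r S rk" and "card S = k"
    by (meson Suc_leD)
  have "S \<subseteq> V" "r \<in> S"
    using R by (auto simp: growing_ranking_def rooted_ranking_def)
  moreover have "S \<noteq> V"
    using \<open>card S = k\<close> Suc.prems by auto
  ultimately obtain w where "w \<in> V - S"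
    by blast
  then have "E\<^sup>*\<^sup>* r w"
    using C \<open>r \<in> V\<close> unfolding connected_graph_def by blast
  then obtain m z where "m \<in> S" "z \<notin> S" "E m z"
    using rtranclp_exits_set[of E r w S] \<open>r \<in> S\<close> \<open>w \<in> V - S\<close> by blast
  moreover have "z \<in> V"
    using graph_edge_in_vertices[OF G \<open>E m z\<close>] by simp
  ultimately obtain p y where choice: "next_vertex V E rk S p y"
    using next_vertex_exists[of S V E rk] by blast
  have "finite S"
    using \<open>S \<subseteq> V\<close> graph_finite[OF G] finite_subset by blast
  moreover have "y \<notin> S"
    using choice by (simp add: next_vertex_def)
  ultimately have "card (insert y S) = Suc k"
    using \<open>card S = k\<close> by simp
  then show ?case
    using growing_ranking_extend[OF graph_sym[OF G] no_triangle R choice] by blast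
qed

lemma unique_parent_ranking_exists:
  assumes G: "graph V E" and C: "connected_graph V E"
    and no_triangle: "triangle_free E"
    and "r \<in> V"
  shows "\<exists>rk. rooted_ranking E r V rk \<and> unique_parent_inherited E rk V"
proof -
  have "1 \<le> card V"
    using \<open>r \<in> V\<close> graph_finite[OF G] by (auto simp: Suc_le_eq card_gt_0_iff)
  then obtain S rk where R: "growing_ranking V E r S rk" and "card S = card V"
    using growing_ranking_of_card[OF G C no_triangle \<open>r \<in> V\<close>] by blast
  moreover have "S \<subseteq> V"
    using R by (simp add: growing_ranking_def)
  ultimately have "S = V"
    using card_subset_eq[OF graph_finite[OF G]] by blast
  then show ?thesis
    using R unfolding growing_ranking_def by blast
qed

text \<open>Besides adjacent vertices, the root and two vertices with the same unique earlier neighbour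
  must receive different colours; these extra constraints make the colouring distinguishing.\<close>
definition conflict :: "('a \<Rightarrow> 'a \<Rightarrow> bool) \<Rightarrow> ('a \<Rightarrow> nat) \<Rightarrow> 'a set \<Rightarrow> 'a \<Rightarrow> 'a \<Rightarrow> 'a \<Rightarrow> bool" where
  "conflict E rk V r a b \<longleftrightarrow> a \<noteq> b \<and> (E a b \<or> a = r \<or> b = r
     \<or> (\<exists>p. earlier_nbrs E rk V a = {p} \<and> earlier_nbrs E rk V b = {p}))"

lemma conflict_sym: "graph V E \<Longrightarrow> conflict E rk V r a b \<Longrightarrow> conflict E rk V r b a"
  unfolding conflict_def by (auto dest: graph_sym)

lemma degree_le_max_degree: "finite V \<Longrightarrow> v \<in> V \<Longrightarrow> degree E v \<le> max_degree V E"
  unfolding max_degree_def by (intro Max_ge) auto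

lemma conflict_earlier_card_le:
  assumes G: "graph V E" and "rk r = 0" and "v \<in> V"
  shows "card {u\<in>V. conflict E rk V r u v \<and> rk u < rk v} \<le> Suc (max_degree V E)"
proof -
  let ?F = "{u\<in>V. conflict E rk V r u v \<and> rk u < rk v}"
  define N where "N w = {u. E w u}" for w
  have fin_N: "finite (N w)" for w
    using graph_finite[OF G] graph_edge_in_vertices[OF G] finite_subset[of "N w" V]
    unfolding N_def by blast
  have deg: "card (N w) \<le> max_degree V E" if "w \<in> V" for w
    using degree_le_max_degree[OF graph_finite[OF G] that] by (simp add: degree_def N_def)
  show ?thesis
  proof (cases "\<exists>q. earlier_nbrs E rk V v = {q}")
    case True
    then obtain q where q: "earlier_nbrs E rk V v = {q}"
      by blast
    then have "q \<in> V" "v \<in> N q"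
      by (auto simp: earlier_nbrs_def N_def)
    have "?F \<subseteq> insert r (insert q (N q - {v}))"
      using q \<open>rk r = 0\<close> graph_sym[OF G]
      by (auto simp: conflict_def earlier_nbrs_def N_def)
    then have "card ?F \<le> card (insert r (insert q (N q - {v})))"
      using fin_N by (intro card_mono) auto
    also have "\<dots> \<le> Suc (Suc (card (N q - {v})))"
      using fin_N by (simp add: card_insert_if)
    also have "\<dots> = Suc (card (N q))"
    proof -
      have "0 < card (N q)"
        using \<open>v \<in> N q\<close> fin_N card_gt_0_iff by blast
      then show ?thesis
        using card_Diff_singleton[OF \<open>v \<in> N q\<close>] by simp
    qed
    finally show ?thesis
      using deg[OF \<open>q \<in> V\<close>] by simp
  next
    case False
    have "?F \<subseteq> insert r (N v)"
      using False \<open>rk r = 0\<close> graph_sym[OF G] by (auto simp: conflict_def N_def)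
    then have "card ?F \<le> card (insert r (N v))"
      using fin_N by (intro card_mono) auto
    also have "\<dots> \<le> Suc (card (N v))"
      using fin_N by (simp add: card_insert_if)
    finally show ?thesis
      using deg[OF \<open>v \<in> V\<close>] by simp
  qed
qed

lemma automorphism_fixes_common_nbr:
  assumes G: "graph V E" and girth: "girth_at_least V E 5" and f: "automorphism V E f"
    and "E a v" "E b v" "a \<noteq> b" "f a = a" "f b = b"
  shows "f v = v"
proof (rule ccontr)
  assume "f v \<noteq> v"
  have "a \<in> V" "b \<in> V" "v \<in> V"
    using assms graph_edge_in_vertices[OF G] by auto
  with f have "E a (f v)" "E b (f v)"
    using \<open>E a v\<close> \<open>E b v\<close> \<open>f a = a\<close> \<open>f b = b\<close> unfolding automorphism_def by metis+
  then show False
    using girth_ge5_no_square[OF G girth \<open>E a v\<close> graph_sym[OF G \<open>E b v\<close>] _ graph_sym[OF G]]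
      \<open>a \<noteq> b\<close> \<open>f v \<noteq> v\<close> by metis
qed

lemma automorphism_fixes_if_earlier_fixed:
  assumes G: "graph V E" and girth: "girth_at_least V E 5"
    and R: "rooted_ranking E r V rk" and inherited: "unique_parent_inherited E rk V"
    and \<phi>: "\<forall>a\<in>V. \<forall>b\<in>V. conflict E rk V r a b \<longrightarrow> \<phi> a \<noteq> \<phi> b"
    and f: "automorphism V E f" and f_\<phi>: "\<forall>u\<in>V. \<phi> (f u) = \<phi> u"
    and "v \<in> V" and earlier_fixed: "\<And>u. u \<in> V \<Longrightarrow> rk u < rk v \<Longrightarrow> f u = u"
  shows "f v = v"
proof (rule ccontr)
  assume moved: "f v \<noteq> v"
  have "f v \<in> V" "inj_on f V"
    using f \<open>v \<in> V\<close> bij_betwE bij_betw_imp_inj_on unfolding automorphism_def by metis+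
  have no_conflict: "\<not> conflict E rk V r v (f v)"
    using \<phi> f_\<phi> \<open>v \<in> V\<close> \<open>f v \<in> V\<close> by metis
  have inj: "inj_on rk V" and nonroot: "\<forall>u\<in>V - {r}. earlier_nbrs E rk V u \<noteq> {}"
    using R by (auto simp: rooted_ranking_def)
  consider "v = r" | p where "earlier_nbrs E rk V v = {p}"
    | a b where "a \<in> earlier_nbrs E rk V v" "b \<in> earlier_nbrs E rk V v" "a \<noteq> b"
    using nonroot \<open>v \<in> V\<close> by blast
  then show False
  proof cases
    case 1
    then show False
      using no_conflict moved by (simp add: conflict_def)
  next
    case (2 p)
    then have "p \<in> V" "E p v" "rk p < rk v"
      by (auto simp: earlier_nbrs_def)
    then have "E p (f v)"
      using f earlier_fixed \<open>v \<in> V\<close> unfolding automorphism_def by metis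
    consider "rk (f v) < rk v" | "rk (f v) = rk v" | "rk v < rk (f v)"
      by linarith
    then show False
    proof cases
      case 1
      then show False
        using earlier_fixed[OF \<open>f v \<in> V\<close>] inj_onD[OF \<open>inj_on f V\<close>] \<open>f v \<in> V\<close> \<open>v \<in> V\<close> moved
        by metis
    next
      case 2
      then show False
        using inj_onD[OF inj] \<open>f v \<in> V\<close> \<open>v \<in> V\<close> moved by metis
    next
      case 3
      then have "earlier_nbrs E rk V (f v) = {p}"
        using inherited \<open>v \<in> V\<close> \<open>f v \<in> V\<close> 2 \<open>E p (f v)\<close>
        unfolding unique_parent_inherited_def by blast
      then show False
        using no_conflict moved 2 by (auto simp: conflict_def)
    qed
  next
    case 3
    then show False
      using automorphism_fixes_common_nbr[OF G girth f] earlier_fixed moved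
      by (auto simp: earlier_nbrs_def)
  qed
qed

lemma conflict_free_distinguishing:
  assumes G: "graph V E" and girth: "girth_at_least V E 5"
    and R: "rooted_ranking E r V rk" and inherited: "unique_parent_inherited E rk V"
    and \<phi>: "\<forall>a\<in>V. \<forall>b\<in>V. conflict E rk V r a b \<longrightarrow> \<phi> a \<noteq> \<phi> b"
  shows "distinguishing V E \<phi>"
  unfolding distinguishing_def
proof (intro allI impI ballI)
  fix f v
  assume f: "automorphism V E f \<and> (\<forall>u\<in>V. \<phi> (f u) = \<phi> u)" and "v \<in> V"
  then show "f v = v"
  proof (induction "rk v" arbitrary: v rule: less_induct)
    case less
    then show ?case
      using automorphism_fixes_if_earlier_fixed[OF G girth R inherited \<phi>] by blast
  qed
qed

theorem proposition5:
  fixes V :: "'a set" and E :: "'a \<Rightarrow> 'a \<Rightarrow> bool" and L :: "'a \<Rightarrow> 'c set"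
  assumes "graph V E"
    and "connected_graph V E"
    and "girth_at_least V E 5"
    and "\<forall>v\<in>V. card (L v) \<ge> max_degree V E + 2"
  shows "\<exists>\<phi> :: 'a \<Rightarrow> 'c. (\<forall>v\<in>V. \<phi> v \<in> L v) \<and> proper_coloring V E \<phi> \<and> distinguishing V E \<phi>"
proof -
  note G = \<open>graph V E\<close> and girth = \<open>girth_at_least V E 5\<close>
  obtain r where "r \<in> V"
    using \<open>connected_graph V E\<close> by (auto simp: connected_graph_def)
  then obtain rk where R: "rooted_ranking E r V rk" and inherited: "unique_parent_inherited E rk V"
    using unique_parent_ranking_exists[OF G \<open>connected_graph V E\<close> girth_ge5_triangle_free[OF G girth]]
    by blast
  have "inj_on rk V" "rk r = 0"
    using R by (auto simp: rooted_ranking_def)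
  have few_earlier: "card {u\<in>V. conflict E rk V r u v \<and> rk u < rk v} < card (L v)" if "v \<in> V" for v
    using conflict_earlier_card_le[of V E rk r v, OF G \<open>rk r = 0\<close> that] assms(4) that by force
  have irrefl: "\<not> conflict E rk V r v v" for v
    by (simp add: conflict_def)
  obtain \<phi> :: "'a \<Rightarrow> 'c" where "\<forall>v\<in>V. \<phi> v \<in> L v"
    and \<phi>: "\<forall>a\<in>V. \<forall>b\<in>V. conflict E rk V r a b \<longrightarrow> \<phi> a \<noteq> \<phi> b"
    using greedy_list_coloring[where H = "conflict E rk V r",
        OF graph_finite[OF G] \<open>inj_on rk V\<close> conflict_sym[OF G] irrefl few_earlier] by blast
  moreover have "proper_coloring V E \<phi>"
    using \<phi> graph_irrefl[OF G] unfolding proper_coloring_def conflict_def by metis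
  ultimately show ?thesis
    using conflict_free_distinguishing[OF G girth R inherited \<phi>] by blast
qed

end
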